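(* For every $M\in\mathbb R^P$, the operator $A_M$ is well defined on $\mathcal H_{\rm sp}$ and for every $X\in\mathcal H_{\rm sp}$, $$A_MX=-\frac12\sum_{\lambda,\mu=1}^P\sum_{j,m=1}^3M^{[\lambda]}M^{[\mu]}A_{jm}(x^{[\mu]}-x^{[\lambda]})\,\sigma_m^{[\mu]}\sigma_j^{[\lambda]}X,$$ where $A_{jm}(x)=(2\pi)^{-3}\int_{\mathbb R^3}|\phi(|k|)|^2e^{-ik\cdot x}\frac{\delta_{jm}|k|^2-k_jk_m}{|k|^2}dk$.
   Context: Fix an integer $P\ge1$ and points $x^{[1]},\dots,x^{[P]}\in\mathbb R^3$. Let $\phi\in\mathcal S(\mathbb R)$ and for $k\in\mathbb R^3$ write $\phi(|k|)$. Let $\mathfrak H=\{V\in L^2(\mathbb R^3,\mathbb C^3):\ k\cdot V(k)=0\text{ a.e.}\}$, $\mathcal H_{\rm ph}$ the symmetric Fock space over $\mathfrak H$ with vacuum $\Psi_0$, Segal fields $\Phi_S(V)=\frac1{\sqrt2}(a^*(V)+a(V))$, $H_{\rm ph}=d\Gamma(M_\omega)$ with $M_\omega$ multiplication by $|k|$. Let $\mathcal H_{\rm sp}=(\mathbb C^2)^{\otimes P}$, $\mathcal H_{\rm tot}=\mathcal H_{\rm ph}\otimes\mathcal H_{\rm sp}$, $\sigma_1,\sigma_2,\sigma_3$ the Pauli matrices, $\sigma_m^{[\lambda]}$ acting as $\sigma_m$ on the $\lambda$-th factor and identity elsewhere. $B_{m,x}(k)=\frac{i\phi(|k|)|k|^{1/2}}{(2\pi)^{3/2}}e^{-ik\cdot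 x}\frac{k\times e_m}{|k|}$ ($e_m$ canonical basis). For $M\in\mathbb R^P$, $H_{\rm int}(M)=\sum_{\lambda=1}^P\sum_{m=1}^3M^{[\lambda]}\Phi_S(B_{m,x^{[\lambda]}})\otimes\sigma_m^{[\lambda]}$. Let $E:\mathcal H_{\rm sp}\to\mathcal H_{\rm tot}$, $EX=\Psi_0\otimes X$, with adjoint $E^*$, and $A_MX=-E^*H_{\rm int}(M)(H_{\rm ph}^{-1}\otimes I)H_{\rm int}(M)EX$, where $H_{\rm ph}^{-1}$ is applied to $H_{\rm int}(M)EX$, which lies in the one-photon sector, on which it acts as multiplication by $1/|k|$. *)

theory Defs
  imports "HOL-Analysis.Analysis"
begin

fun iter_deriv :: "nat \<Rightarrow> (real \<Rightarrow> complex) \<Rightarrow> real \<Rightarrow> complex" where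
  "iter_deriv 0 f = f"
| "iter_deriv (Suc n) f = (\<lambda>t. vector_derivative (iter_deriv n f) (at t))"

definition schwartz :: "(real \<Rightarrow> complex) \<Rightarrow> bool" where
  "schwartz f \<longleftrightarrow>
     (\<forall>n t. iter_deriv n f differentiable (at t)) \<and>
     (\<forall>n m. \<exists>C. \<forall>t. \<bar>t\<bar> ^ m * norm (iter_deriv n f t) \<le> C)"

definition l2inner :: "(real^3 \<Rightarrow> complex^3) \<Rightarrow> (real^3 \<Rightarrow> complex^3) \<Rightarrow> complex" where
  "l2inner V W = (\<integral>k. (\<Sum>i\<in>UNIV. cnj (V k $ i) * W k $ i) \<partial>lborel)"

definition in_frak_h :: "(real^3 \<Rightarrow> complex^3) \<Rightarrow> bool" where
  "in_frak_h V \<longleftrightarrow> V \<in> borel_measurable lborel \<and>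
     integrable lborel (\<lambda>k. (norm (V k))\<^sup>2) \<and>
     (AE k in lborel. (\<Sum>i\<in>UNIV. complex_of_real (k $ i) * V k $ i) = 0)"

definition Bfun :: "(real \<Rightarrow> complex) \<Rightarrow> 3 \<Rightarrow> real^3 \<Rightarrow> real^3 \<Rightarrow> complex^3" where
  "Bfun \<phi> m x k = (\<chi> i. \<i> * \<phi> (norm k) * complex_of_real (sqrt (norm k) / (2 * pi) powr (3/2))
        * exp (- \<i> * complex_of_real (k \<bullet> x))
        * complex_of_real ((cross3 k (axis m 1)) $ i / norm k))"

section \<open>Spin space (C^2)^{tensor P}, realised as functions on spin configurations\<close>

type_synonym 'p spin = "('p \<Rightarrow> bool) \<Rightarrow> complex"

text \<open>Pauli matrix sigma_m acting on the lambda-th factor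
  (False = first basis vector, True = second basis vector).\<close>
definition pauli :: "3 \<Rightarrow> 'p \<Rightarrow> 'p spin \<Rightarrow> 'p spin" where
  "pauli m l X = (\<lambda>s.
     if m = 1 then X (s(l := \<not> s l))
     else if m = 2 then (if s l then \<i> else - \<i>) * X (s(l := \<not> s l))
     else (if s l then -1 else 1) * X s)"

section \<open>Total space, truncated to the photon sectors with at most one photon\<close>

text \<open>A state is (vacuum component in H_sp, one-photon component in frak h tensor H_sp).
  The two-photon component produced by the second application of H_int is dropped;
  it is annihilated by E* anyway.\<close>
type_synonym 'p tot = "'p spin \<times> (('p \<Rightarrow> bool) \<Rightarrow> real^3 \<Rightarrow> complex^3)"

definition Emb :: "'p spin \<Rightarrow> 'p tot" where
  "Emb X = (X, \<lambda>s k. 0)"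

definition Emb_adj :: "'p tot \<Rightarrow> 'p spin" where
  "Emb_adj \<Psi> = fst \<Psi>"

text \<open>Segal field Phi_S(V) (restricted to sectors 0 and 1, result projected to sectors 0 and 1),
  tensored with a spin operator S.\<close>
definition segal_tensor :: "(real^3 \<Rightarrow> complex^3) \<Rightarrow> ('p spin \<Rightarrow> 'p spin) \<Rightarrow> 'p tot \<Rightarrow> 'p tot" where
  "segal_tensor V S \<Psi> =
     ((\<lambda>s. (1 / complex_of_real (sqrt 2)) *
              l2inner V (\<lambda>k. \<chi> i. S (\<lambda>s'. snd \<Psi> s' k $ i) s)),
      (\<lambda>s k. \<chi> i. (1 / complex_of_real (sqrt 2)) * S (fst \<Psi>) s * V k $ i))"

definition Hint :: "(real \<Rightarrow> complex) \<Rightarrow> ('p::finite \<Rightarrow> real^3) \<Rightarrow> ('p \<Rightarrow> real) \<Rightarrow> 'p tot \<Rightarrow> 'p tot" where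
  "Hint \<phi> x M \<Psi> =
     ((\<lambda>s. \<Sum>l\<in>UNIV. \<Sum>m\<in>UNIV. complex_of_real (M l) *
            fst (segal_tensor (Bfun \<phi> m (x l)) (pauli m l) \<Psi>) s),
      (\<lambda>s k. \<chi> i. \<Sum>l\<in>UNIV. \<Sum>m\<in>UNIV. complex_of_real (M l) *
            snd (segal_tensor (Bfun \<phi> m (x l)) (pauli m l) \<Psi>) s k $ i))"

text \<open>H_ph^{-1} on the one-photon sector: multiplication by 1/|k|
  (only applied to states with vanishing vacuum component).\<close>
definition Hph_inv :: "'p tot \<Rightarrow> 'p tot" where
  "Hph_inv \<Psi> = ((\<lambda>s. 0), (\<lambda>s k. \<chi> i. (1 / complex_of_real (norm k)) * snd \<Psi> s k $ i))"

definition A_op :: "(real \<Rightarrow> complex) \<Rightarrow> ('p::finite \<Rightarrow> real^3) \<Rightarrow> ('p \<Rightarrow> real) \<Rightarrow> 'p spin \<Rightarrow> 'p spin" where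
  "A_op \<phi> x M X = (\<lambda>s. - Emb_adj (Hint \<phi> x M (Hph_inv (Hint \<phi> x M (Emb X)))) s)"

definition Ajm_integrand :: "(real \<Rightarrow> complex) \<Rightarrow> 3 \<Rightarrow> 3 \<Rightarrow> real^3 \<Rightarrow> real^3 \<Rightarrow> complex" where
  "Ajm_integrand \<phi> j m y k =
     complex_of_real ((cmod (\<phi> (norm k)))\<^sup>2) * exp (- \<i> * complex_of_real (k \<bullet> y)) *
     complex_of_real (((if j = m then (norm k)\<^sup>2 else 0) - k $ j * k $ m) / (norm k)\<^sup>2)"

definition Ajm :: "(real \<Rightarrow> complex) \<Rightarrow> 3 \<Rightarrow> 3 \<Rightarrow> real^3 \<Rightarrow> complex" where
  "Ajm \<phi> j m y = complex_of_real (1 / (2 * pi) ^ 3) * (\<integral>k. Ajm_integrand \<phi> j m y k \<partial>lborel)"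

end

theory Submission
  imports Defs
begin

(* Only the vacuum and one-photon sectors matter: H_int(M) E X is the one-photon state
   2^(-1/2) sum_{l,m} M^l B_{m,x^l} (x) sigma_m^l X, H_ph^-1 divides it by |k|, and E* H_int(M)
   pairs the result with the B_{n,x^mu}.  Pointwise in k, the pairing of B_{n,y} with B_{m,z} / |k|
   is (2 pi)^-3 times the integrand of A_{nm}(z - y), because
   (k x e_n) . (k x e_m) = delta_{nm} |k|^2 - k_n k_m; and A_{nm}(-y) = A_{mn}(y) by k |-> -k.
   All integrals converge since |phi(|k|)|^2 (|k| + 1 + 1/|k|) is bounded by a multiple of
   min(|k|^-1, |k|^-6), which is dominated by the integrable product of one-dimensional profiles
   prod_i g(k_i), with g(t) = |t|^(-1/3) near 0 and t^-2 at infinity. *)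

section \<open>An integrable majorant of min(|k|^-1, |k|^-6) on R^3\<close>

definition half_line_majorant :: "real \<Rightarrow> real" where
  "half_line_majorant t = indicator {0..1} t * t powr (-1/3) + indicator {1..} t * t powr (-2)"

definition line_majorant :: "real \<Rightarrow> real" where
  "line_majorant t = half_line_majorant t + half_line_majorant (- t)"

lemma half_line_majorant_nonneg: "0 \<le> half_line_majorant t"
  unfolding half_line_majorant_def by (auto simp: indicator_def)

lemma line_majorant_nonneg: "0 \<le> line_majorant t"
  unfolding line_majorant_def using half_line_majorant_nonneg[of t] half_line_majorant_nonneg[of "-t"]
  by simp

lemma borel_measurable_half_line_majorant [measurable]: "half_line_majorant \<in> borel_measurable borel"
  unfolding half_line_majorant_def by measurable

lemma integrable_indicator_powr:
  fixes A :: "real set" and a :: real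
  assumes "A \<in> sets borel" "\<And>t. t \<in> A \<Longrightarrow> 0 \<le> t" and "((\<lambda>t. t powr a) has_integral I) A"
  shows "integrable lborel (\<lambda>t. indicator A t * t powr a)"
proof (rule integrableI_nonneg)
  show "(\<lambda>t. indicator A t * t powr a) \<in> borel_measurable lborel"
    using assms(1) by measurable
  show "AE t in lborel. 0 \<le> indicator A t * t powr a"
    by (auto simp: indicator_def)
  have "(\<integral>\<^sup>+ t. ennreal (indicator A t * t powr a) \<partial>lborel) = (\<integral>\<^sup>+ t. ennreal (t powr a) * indicator A t \<partial>lborel)"
    by (intro nn_integral_cong) (auto simp: indicator_def)
  also have "\<dots> = ennreal I"
    by (rule nn_integral_has_integral_lebesgue'[OF _ assms(3)]) simp
  finally show "(\<integral>\<^sup>+ t. ennreal (indicator A t * t powr a) \<partial>lborel) < \<infinity>"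
    by simp
qed

lemma integrable_half_line_majorant: "integrable lborel half_line_majorant"
proof -
  have "integrable lborel (\<lambda>t. indicator {0..1} t * t powr (-1/3::real))"
    by (rule integrable_indicator_powr[OF _ _ has_integral_powr_from_0]) auto
  moreover have "integrable lborel (\<lambda>t. indicator {1..} t * t powr (-2::real))"
    by (rule integrable_indicator_powr[OF _ _ has_integral_powr_to_inf]) auto
  ultimately show ?thesis
    unfolding half_line_majorant_def by (rule Bochner_Integration.integrable_add)
qed

lemma integrable_line_majorant: "integrable lborel line_majorant"
proof -
  have "integrable (distr lborel borel uminus) half_line_majorant"
    using integrable_half_line_majorant by (simp add: lborel_distr_uminus)
  then have "integrable lborel (\<lambda>t. half_line_majorant (- t))"
    by (subst (asm) integrable_distr_eq) auto
  then show ?thesis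
    unfolding line_majorant_def by (rule Bochner_Integration.integrable_add[OF integrable_half_line_majorant])
qed

lemma line_majorant_lower_bound:
  assumes "t \<noteq> 0" "\<bar>t\<bar> \<le> r"
  shows "min (r powr (-1/3)) (r powr (-2)) \<le> line_majorant t"
proof -
  have hm: "half_line_majorant u \<le> line_majorant t" if "u = t \<or> u = - t" for u
    using that half_line_majorant_nonneg[of t] half_line_majorant_nonneg[of "-t"]
    unfolding line_majorant_def by auto
  show ?thesis
  proof (cases "\<bar>t\<bar> \<le> 1")
    case True
    have "r powr (-1/3) \<le> \<bar>t\<bar> powr (-1/3)"
      using assms by (intro powr_mono2') auto
    also have "\<dots> \<le> half_line_majorant \<bar>t\<bar>"
      using True assms(1) by (simp add: half_line_majorant_def)
    also have "\<dots> \<le> line_majorant t"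
      by (intro hm) auto
    finally show ?thesis by simp
  next
    case False
    have "r powr (-2) \<le> \<bar>t\<bar> powr (-2)"
      using assms False by (intro powr_mono2') auto
    also have "\<dots> \<le> half_line_majorant \<bar>t\<bar>"
      using False by (simp add: half_line_majorant_def)
    also have "\<dots> \<le> line_majorant t"
      by (intro hm) auto
    finally show ?thesis by simp
  qed
qed

lemma integrable_prod_coordinates:
  fixes g :: "real \<Rightarrow> real"
  assumes g: "integrable lborel g"
  shows "integrable lborel (\<lambda>k::real^'n. \<Prod>i\<in>UNIV. g (k $ i))"
proof -
  interpret product_sigma_finite "\<lambda>_. lborel" by standard
  have [measurable]: "g \<in> borel_measurable borel"
    using borel_measurable_integrable[OF g] by simp
  define T where "T = (\<lambda>f. \<Sum>b\<in>(Basis::(real^'n) set). f b *\<^sub>R b)"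
  have [measurable]: "T \<in> (\<Pi>\<^sub>M b\<in>Basis. lborel) \<rightarrow>\<^sub>M borel"
    unfolding T_def by measurable
  have inj: "inj (\<lambda>i::'n. axis i (1::real))"
    by (auto simp: inj_def axis_eq_axis)
  have Basis_eq: "(Basis :: (real^'n) set) = range (\<lambda>i. axis i 1)"
    by (auto simp: Basis_vec_def)
  have prod_Basis: "(\<Prod>i\<in>UNIV. g (k $ i)) = (\<Prod>b\<in>Basis. g (k \<bullet> b))" for k :: "real^'n"
    unfolding Basis_eq by (subst prod.reindex[OF inj]) (simp add: cart_eq_inner_axis o_def)
  have "(\<Prod>i\<in>UNIV. g (T f $ i)) = (\<Prod>b\<in>Basis. g (f b))" for f
    unfolding prod_Basis T_def by (simp add: inner_sum_left inner_Basis if_distrib cong: if_cong)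
  moreover have "integrable (\<Pi>\<^sub>M b\<in>(Basis::(real^'n) set). lborel) (\<lambda>f. \<Prod>b\<in>Basis. g (f b))"
    by (rule product_integrable_prod) (auto intro: g)
  ultimately have "integrable (distr (\<Pi>\<^sub>M b\<in>(Basis::(real^'n) set). lborel) borel T) (\<lambda>k. \<Prod>i\<in>UNIV. g (k $ i))"
    by (subst integrable_distr_eq) auto
  then show ?thesis
    by (simp add: T_def lborel_eq[symmetric])
qed

lemma min_powr_cube:
  fixes r :: real
  shows "min (r powr (-1/3)) (r powr (-2)) ^ 3 = min (r powr (-1)) (r powr (-6))"
proof -
  have cube: "(r powr a) ^ 3 = r powr (3 * a)" for a
    by (simp add: power3_eq_cube flip: powr_add)
  have "min (r powr (-1/3)) (r powr (-2)) ^ 3 = min ((r powr (-1/3)) ^ 3) ((r powr (-2)) ^ 3)"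
    by (auto simp: min_def power_mono)
  then show ?thesis
    unfolding cube by simp
qed

lemma integrable_min_inverse_powers:
  "integrable lborel (\<lambda>k::real^3. min (norm k powr (-1)) (norm k powr (-6)))"
proof (rule Bochner_Integration.integrable_bound[OF integrable_prod_coordinates[OF integrable_line_majorant]])
  show "(\<lambda>k::real^3. min (norm k powr (-1)) (norm k powr (-6))) \<in> borel_measurable lborel"
    by measurable
  have "AE k in lborel. \<forall>i. (k::real^3) $ i \<noteq> 0"
  proof -
    have "{k::real^3. k $ i = 0} \<in> null_sets lborel" for i
      using negligible_standard_hyperplane_cart[of i]
      by (simp add: negligible_iff_null_sets null_sets_completion_iff)
    then have "(\<Union>i. {k::real^3. k $ i = 0}) \<in> null_sets lborel"
      by auto
    then show ?thesis
      by (rule AE_not_in[THEN eventually_mono]) auto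
  qed
  then show "AE k::real^3 in lborel. norm (min (norm k powr (-1)) (norm k powr (-6))) \<le> norm (\<Prod>i\<in>UNIV. line_majorant (k $ i))"
  proof (rule eventually_mono)
    fix k :: "real^3"
    assume nz: "\<forall>i. k $ i \<noteq> 0"
    let ?m = "min (norm k powr (-1/3)) (norm k powr (-2))"
    have coordinate_bound: "?m \<le> line_majorant (k $ i)" for i
      using nz component_le_norm_cart[of k i] by (intro line_majorant_lower_bound) auto
    have "(\<Prod>i::3\<in>UNIV. ?m) \<le> (\<Prod>i\<in>UNIV. line_majorant (k $ i))"
      by (rule prod_mono) (use coordinate_bound in auto)
    then have "?m ^ 3 \<le> (\<Prod>i\<in>UNIV. line_majorant (k $ i))"
      by simp
    moreover have "0 \<le> (\<Prod>i\<in>UNIV. line_majorant (k $ i))"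
      by (simp add: prod_nonneg line_majorant_nonneg)
    ultimately show "norm (min (norm k powr (-1)) (norm k powr (-6))) \<le> norm (\<Prod>i\<in>UNIV. line_majorant (k $ i))"
      using min_powr_cube[of "norm k"] by simp
  qed
qed

section \<open>Decay of Schwartz functions\<close>

lemma schwartz_decay:
  assumes "schwartz \<phi>"
  obtains C where "\<And>t. \<bar>t\<bar> ^ n * cmod (\<phi> t) \<le> C"
  using assms unfolding schwartz_def by (metis iter_deriv.simps(1))

lemma borel_measurable_schwartz:
  assumes "schwartz \<phi>"
  shows "\<phi> \<in> borel_measurable borel"
proof (rule borel_measurable_continuous_onI)
  have "\<phi> differentiable (at t)" for t
    using assms unfolding schwartz_def by (metis iter_deriv.simps(1))
  then show "continuous_on UNIV \<phi>"
    by (simp add: continuous_at_imp_continuous_on differentiable_imp_continuous_within)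
qed

lemma weight_bound_near_zero:
  fixes a r :: real
  assumes r: "0 < r" "r \<le> 1" and a: "0 \<le> a" "a \<le> C"
  shows "a\<^sup>2 * (r + 1 + 1 / r) \<le> 3 * C\<^sup>2 / r"
proof -
  have "r + 1 + 1 / r = (r * r + r + 1) / r"
    using r by (simp add: field_simps)
  also have "\<dots> \<le> 3 / r"
    using mult_le_one[OF r(2) _ r(2)] r by (intro divide_right_mono) auto
  finally have "r + 1 + 1 / r \<le> 3 / r" .
  moreover have "a\<^sup>2 \<le> C\<^sup>2"
    using a by (simp add: power_mono)
  ultimately have "a\<^sup>2 * (r + 1 + 1 / r) \<le> C\<^sup>2 * (3 / r)"
    using r by (intro mult_mono) auto
  then show ?thesis
    by (simp add: mult.commute)
qed

lemma weight_bound_at_infinity: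
  fixes a r :: real
  assumes r: "1 < r" and a: "0 \<le> a" "r ^ 4 * a \<le> C"
  shows "a\<^sup>2 * (r + 1 + 1 / r) \<le> 3 * C\<^sup>2 / r ^ 6"
proof -
  have decay: "a\<^sup>2 * r ^ 8 \<le> C\<^sup>2"
    using power_mono[OF a(2), of 2] r a(1) by (simp add: power_mult_distrib mult.commute flip: power_mult)
  have "1 / r \<le> 1"
    using r by simp
  then have "r + 1 + 1 / r \<le> 3 * r"
    using r by linarith
  then have "a\<^sup>2 * (r + 1 + 1 / r) \<le> a\<^sup>2 * (3 * r)"
    by (rule mult_left_mono) simp
  also have "\<dots> = 3 * (a\<^sup>2 * r ^ 8) / r ^ 7"
    using r by (simp add: power_Suc2[of r 7, simplified])
  also have "\<dots> \<le> 3 * C\<^sup>2 / r ^ 7"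
    using decay r by (intro divide_right_mono) auto
  also have "\<dots> \<le> 3 * C\<^sup>2 / r ^ 6"
    using r by (intro divide_left_mono) (auto simp: power_increasing)
  finally show ?thesis .
qed

lemma weight_bound:
  fixes a r :: real
  assumes r: "0 < r" and a: "0 \<le> a" "a \<le> C0" "r ^ 4 * a \<le> C4"
  shows "a\<^sup>2 * (r + 1 + 1 / r) \<le> 3 * (C0\<^sup>2 + C4\<^sup>2) * min (r powr (-1)) (r powr (-6))"
proof (cases "r \<le> 1")
  case True
  have "r ^ 6 \<le> r"
    using power_decreasing[of 1 6 r] True r by simp
  then have "min (r powr (-1)) (r powr (-6)) = 1 / r"
    using r by (simp add: powr_minus_divide powr_realpow frac_le min_def)
  moreover have "3 * C0\<^sup>2 / r \<le> 3 * (C0\<^sup>2 + C4\<^sup>2) / r"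
    using r by (intro divide_right_mono) auto
  ultimately show ?thesis
    using weight_bound_near_zero[OF r True a(1,2)] by simp
next
  case False
  have "r \<le> r ^ 6"
    using power_increasing[of 1 6 r] False by simp
  then have "1 / r ^ 6 \<le> 1 / r"
    using False by (intro divide_left_mono) auto
  then have "min (r powr (-1)) (r powr (-6)) = 1 / r ^ 6"
    using False by (simp add: powr_minus_divide powr_realpow min_def)
  moreover have "3 * C4\<^sup>2 / r ^ 6 \<le> 3 * (C0\<^sup>2 + C4\<^sup>2) / r ^ 6"
    by (intro divide_right_mono) auto
  ultimately show ?thesis
    using weight_bound_at_infinity[of r a C4] False a by simp
qed

lemma integrable_schwartz_weight:
  assumes "schwartz \<phi>"
  shows "integrable lborel (\<lambda>k::real^3. (cmod (\<phi> (norm k)))\<^sup>2 * (norm k + 1 + 1 / norm k))"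
proof -
  obtain C0 C4 where C0: "\<And>t. \<bar>t\<bar> ^ 0 * cmod (\<phi> t) \<le> C0" and C4: "\<And>t. \<bar>t\<bar> ^ 4 * cmod (\<phi> t) \<le> C4"
    using schwartz_decay[OF assms] by metis
  have [measurable]: "\<phi> \<in> borel_measurable borel"
    using assms by (rule borel_measurable_schwartz)
  show ?thesis
  proof (rule Bochner_Integration.integrable_bound)
    show "integrable lborel (\<lambda>k::real^3. 3 * (C0\<^sup>2 + C4\<^sup>2) * min (norm k powr (-1)) (norm k powr (-6)))"
      using integrable_min_inverse_powers by simp
    show "(\<lambda>k::real^3. (cmod (\<phi> (norm k)))\<^sup>2 * (norm k + 1 + 1 / norm k)) \<in> borel_measurable lborel"
      by measurable
    show "AE k::real^3 in lborel. norm ((cmod (\<phi> (norm k)))\<^sup>2 * (norm k + 1 + 1 / norm k))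
        \<le> norm (3 * (C0\<^sup>2 + C4\<^sup>2) * min (norm k powr (-1)) (norm k powr (-6)))"
      using AE_lborel_singleton[of 0]
    proof (rule eventually_mono)
      fix k :: "real^3"
      assume "k \<noteq> 0"
      then show "norm ((cmod (\<phi> (norm k)))\<^sup>2 * (norm k + 1 + 1 / norm k))
          \<le> norm (3 * (C0\<^sup>2 + C4\<^sup>2) * min (norm k powr (-1)) (norm k powr (-6)))"
        using weight_bound[of "norm k" "cmod (\<phi> (norm k))" C0 C4] C0 C4 by simp
    qed
  qed
qed

section \<open>The coupling functions\<close>

lemma inner_cross3_axis:
  fixes k :: "real^3"
  shows "cross3 k (axis n 1) \<bullet> cross3 k (axis m 1) = (if n = m then (norm k)\<^sup>2 else 0) - k $ n * k $ m"
proof -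
  have norm_sq: "(norm k)\<^sup>2 = k $ 1 * k $ 1 + k $ 2 * k $ 2 + k $ 3 * k $ 3"
    by (simp add: power2_norm_eq_inner inner_vec_def sum_3)
  show ?thesis
    unfolding norm_sq using exhaust_3[of n] exhaust_3[of m]
    by (auto simp: cross3_def inner_vec_def sum_3 vector_def axis_def algebra_simps)
qed

lemma norm_cross3_axis_le: "norm (cross3 k (axis m 1)) \<le> norm (k::real^3)"
proof -
  have "(norm (cross3 k (axis m 1)))\<^sup>2 = cross3 k (axis m 1) \<bullet> cross3 k (axis m 1)"
    by (simp add: power2_norm_eq_inner)
  also have "\<dots> = (norm k)\<^sup>2 - (k $ m)\<^sup>2"
    using inner_cross3_axis[of k m m] by (simp add: power2_eq_square)
  also have "\<dots> \<le> (norm k)\<^sup>2"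
    by simp
  finally show ?thesis
    by (rule power2_le_imp_le) simp
qed

definition coupling_amplitude :: "(real \<Rightarrow> complex) \<Rightarrow> real^3 \<Rightarrow> real^3 \<Rightarrow> complex" where
  "coupling_amplitude \<phi> y k = \<i> * \<phi> (norm k) * complex_of_real (sqrt (norm k) / (2 * pi) powr (3/2))
        * exp (- \<i> * complex_of_real (k \<bullet> y))"

lemma Bfun_nth:
  "Bfun \<phi> m y k $ i = coupling_amplitude \<phi> y k * complex_of_real (cross3 k (axis m 1) $ i / norm k)"
  unfolding Bfun_def coupling_amplitude_def by simp

lemma cnj_coupling_amplitude_mult:
  "cnj (coupling_amplitude \<phi> y1 k) * coupling_amplitude \<phi> y2 k =
     complex_of_real ((cmod (\<phi> (norm k)))\<^sup>2 * norm k / (2 * pi) ^ 3) * exp (- \<i> * complex_of_real (k \<bullet> (y2 - y1)))"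
proof -
  define s where "s = sqrt (norm k) / (2 * pi) powr (3/2)"
  have "(2 * pi) powr (3/2) * (2 * pi) powr (3/2) = (2 * pi) ^ 3"
    by (simp only: powr_add[symmetric]) (simp add: powr_numeral)
  then have s_sq: "s * s = norm k / (2 * pi) ^ 3"
    unfolding s_def by simp
  have phase: "cnj (exp (- \<i> * complex_of_real (k \<bullet> y1))) * exp (- \<i> * complex_of_real (k \<bullet> y2))
      = exp (- \<i> * complex_of_real (k \<bullet> (y2 - y1)))"
    by (simp add: exp_cnj exp_add[symmetric] inner_diff_right algebra_simps)
  have modulus: "cnj (\<phi> (norm k)) * \<phi> (norm k) = complex_of_real ((cmod (\<phi> (norm k)))\<^sup>2)"
    by (metis complex_norm_square mult.commute of_real_power)
  have "cnj (coupling_amplitude \<phi> y1 k) * coupling_amplitude \<phi> y2 k =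
     (cnj (\<phi> (norm k)) * \<phi> (norm k)) * complex_of_real (s * s) *
     (cnj (exp (- \<i> * complex_of_real (k \<bullet> y1))) * exp (- \<i> * complex_of_real (k \<bullet> y2)))"
    unfolding coupling_amplitude_def s_def[symmetric] by (simp add: algebra_simps)
  then show ?thesis
    unfolding phase modulus s_sq by simp
qed

lemma sum_cnj_Bfun_mult:
  "(\<Sum>i\<in>UNIV. cnj (Bfun \<phi> n y1 k $ i) * Bfun \<phi> m y2 k $ i) =
     complex_of_real ((cmod (\<phi> (norm k)))\<^sup>2 * norm k / (2 * pi) ^ 3) * exp (- \<i> * complex_of_real (k \<bullet> (y2 - y1)))
     * complex_of_real (((if n = m then (norm k)\<^sup>2 else 0) - k $ n * k $ m) / (norm k)\<^sup>2)"
proof -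
  have "(\<Sum>i\<in>UNIV. cnj (Bfun \<phi> n y1 k $ i) * Bfun \<phi> m y2 k $ i)
     = cnj (coupling_amplitude \<phi> y1 k) * coupling_amplitude \<phi> y2 k *
       complex_of_real (\<Sum>i\<in>UNIV. cross3 k (axis n 1) $ i * cross3 k (axis m 1) $ i / (norm k)\<^sup>2)"
    unfolding Bfun_nth by (simp add: sum_distrib_left power2_eq_square algebra_simps)
  also have "(\<Sum>i\<in>UNIV. cross3 k (axis n 1) $ i * cross3 k (axis m 1) $ i / (norm k)\<^sup>2)
      = (cross3 k (axis n 1) \<bullet> cross3 k (axis m 1)) / (norm k)\<^sup>2"
    by (simp add: inner_vec_def sum_divide_distrib)
  finally show ?thesis
    unfolding cnj_coupling_amplitude_mult inner_cross3_axis by simp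
qed

lemma sum_cnj_Bfun_mult_div_norm:
  "(\<Sum>i\<in>UNIV. cnj (Bfun \<phi> n y1 k $ i) * Bfun \<phi> m y2 k $ i) / complex_of_real (norm k) =
     complex_of_real (1 / (2 * pi) ^ 3) * Ajm_integrand \<phi> n m (y2 - y1) k"
proof (cases "k = 0")
  case False
  then have "norm k > 0"
    by simp
  then show ?thesis
    unfolding sum_cnj_Bfun_mult Ajm_integrand_def by (simp add: field_simps)
next
  case True
  then have "Ajm_integrand \<phi> n m (y2 - y1) k = 0"
    by (simp add: Ajm_integrand_def)
  with True show ?thesis
    by (simp only: norm_zero of_real_0 div_by_0 mult_zero_right)
qed

lemma norm_Bfun_sq_le: "(norm (Bfun \<phi> m y k))\<^sup>2 \<le> (cmod (\<phi> (norm k)))\<^sup>2 * norm k"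
proof -
  have norm_sq: "(norm (Bfun \<phi> m y k))\<^sup>2 = (\<Sum>i\<in>UNIV. (cmod (Bfun \<phi> m y k $ i))\<^sup>2)"
    unfolding norm_vec_def L2_set_def by (simp add: sum_nonneg)
  have "complex_of_real ((norm (Bfun \<phi> m y k))\<^sup>2) = (\<Sum>i\<in>UNIV. cnj (Bfun \<phi> m y k $ i) * Bfun \<phi> m y k $ i)"
    unfolding norm_sq of_real_sum complex_norm_square by (simp add: mult.commute)
  also have "\<dots> = complex_of_real ((cmod (\<phi> (norm k)))\<^sup>2 * norm k * (((norm k)\<^sup>2 - (k $ m)\<^sup>2) / (norm k)\<^sup>2) / (2 * pi) ^ 3)"
    unfolding sum_cnj_Bfun_mult by (simp add: power2_eq_square)
  finally have norm_eq: "(norm (Bfun \<phi> m y k))\<^sup>2 = (cmod (\<phi> (norm k)))\<^sup>2 * norm k * (((norm k)\<^sup>2 - (k $ m)\<^sup>2) / (norm k)\<^sup>2) / (2 * pi) ^ 3"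
    by (simp only: of_real_eq_iff)
  define q where "q = ((norm k)\<^sup>2 - (k $ m)\<^sup>2) / (norm k)\<^sup>2"
  have "(k $ m)\<^sup>2 \<le> (norm k)\<^sup>2"
    using component_le_norm_cart[of k m] by (simp add: abs_le_square_iff[symmetric])
  then have "0 \<le> q" "q \<le> 1"
    unfolding q_def by (auto simp: divide_le_eq_1)
  have "1 \<le> (2 * pi) ^ 3"
    using pi_gt3 by (intro one_le_power) auto
  moreover have "0 \<le> (cmod (\<phi> (norm k)))\<^sup>2 * norm k * q"
    using \<open>0 \<le> q\<close> by simp
  ultimately have "(norm (Bfun \<phi> m y k))\<^sup>2 \<le> (cmod (\<phi> (norm k)))\<^sup>2 * norm k * q"
    unfolding norm_eq q_def[symmetric] using divide_left_mono[of 1 "(2 * pi) ^ 3"] by simp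
  also have "\<dots> \<le> (cmod (\<phi> (norm k)))\<^sup>2 * norm k"
    using \<open>q \<le> 1\<close> by (intro mult_left_le) auto
  finally show ?thesis .
qed

lemma norm_Ajm_integrand_le: "cmod (Ajm_integrand \<phi> j m y k) \<le> (cmod (\<phi> (norm k)))\<^sup>2"
proof -
  define q where "q = ((if j = m then (norm k)\<^sup>2 else 0) - k $ j * k $ m) / (norm k)\<^sup>2"
  have "\<bar>cross3 k (axis j 1) \<bullet> cross3 k (axis m 1)\<bar> \<le> norm (cross3 k (axis j 1)) * norm (cross3 k (axis m 1))"
    by (rule Cauchy_Schwarz_ineq2)
  also have "\<dots> \<le> (norm k)\<^sup>2"
    unfolding power2_eq_square by (intro mult_mono norm_cross3_axis_le) auto
  finally have "\<bar>q\<bar> \<le> 1"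
    unfolding q_def inner_cross3_axis by (cases "k = 0") (auto simp: divide_le_eq_1)
  moreover have "cmod (Ajm_integrand \<phi> j m y k) = (cmod (\<phi> (norm k)))\<^sup>2 * \<bar>q\<bar>"
    unfolding Ajm_integrand_def q_def[symmetric] norm_mult norm_of_real
    by (simp add: norm_exp_i_times[of "- (k \<bullet> y)", simplified])
  ultimately show ?thesis
    by (simp add: mult_left_le)
qed

lemma Bfun_transverse: "(\<Sum>i\<in>UNIV. complex_of_real (k $ i) * Bfun \<phi> m y k $ i) = 0"
proof -
  have "(\<Sum>i\<in>UNIV. complex_of_real (k $ i) * Bfun \<phi> m y k $ i)
      = coupling_amplitude \<phi> y k * complex_of_real ((\<Sum>i\<in>UNIV. k $ i * cross3 k (axis m 1) $ i) / norm k)"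
    unfolding Bfun_nth by (simp add: sum_distrib_left sum_divide_distrib algebra_simps)
  also have "(\<Sum>i\<in>UNIV. k $ i * cross3 k (axis m 1) $ i) = k \<bullet> cross3 k (axis m 1)"
    by (simp add: inner_vec_def)
  finally show ?thesis
    by (simp add: dot_cross_self)
qed

lemma borel_measurable_vec_by_components:
  fixes f :: "'a \<Rightarrow> 'b::euclidean_space ^ 'n"
  assumes "\<And>i. (\<lambda>x. f x $ i) \<in> borel_measurable M"
  shows "f \<in> borel_measurable M"
proof (rule borel_measurable_euclidean_space[THEN iffD2], intro ballI)
  fix b :: "'b ^ 'n"
  assume "b \<in> Basis"
  then obtain i u where b: "b = axis i u" "u \<in> Basis"
    by (auto simp: Basis_vec_def)
  have "(\<lambda>x. f x $ i \<bullet> u) \<in> borel_measurable M"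
    using assms[of i] by measurable
  then show "(\<lambda>x. f x \<bullet> b) \<in> borel_measurable M"
    by (simp add: b inner_axis)
qed

lemma borel_measurable_cross3_nth [measurable]:
  "(\<lambda>k. cross3 k v $ i) \<in> borel_measurable borel"
proof -
  have "(\<lambda>k::real^3. cross3 k v) \<in> borel_measurable borel"
    by (intro borel_measurable_continuous_onI continuous_on_cross continuous_intros)
  then show ?thesis
    using borel_measurable_nth[of i] by (rule measurable_compose)
qed

lemma borel_measurable_Bfun:
  assumes "schwartz \<phi>"
  shows "Bfun \<phi> m y \<in> borel_measurable lborel"
proof (rule borel_measurable_vec_by_components)
  fix i
  have [measurable]: "\<phi> \<in> borel_measurable borel"
    using assms by (rule borel_measurable_schwartz)
  show "(\<lambda>k. Bfun \<phi> m y k $ i) \<in> borel_measurable lborel"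
    unfolding Bfun_def vec_lambda_beta by measurable
qed

lemma borel_measurable_Ajm_integrand:
  assumes "schwartz \<phi>"
  shows "Ajm_integrand \<phi> j m y \<in> borel_measurable borel"
proof -
  have [measurable]: "\<phi> \<in> borel_measurable borel"
    using assms by (rule borel_measurable_schwartz)
  show ?thesis
    unfolding Ajm_integrand_def by measurable
qed

(* The summand 1 makes the weight dominate (cmod (\<phi> (norm k)))\<^sup>2 also at k = 0, where 1 / norm k = 0. *)
lemma integrable_dominated_by_schwartz_weight:
  fixes f :: "real^3 \<Rightarrow> 'b::{banach, second_countable_topology}"
  assumes "schwartz \<phi>" "f \<in> borel_measurable lborel"
    and "\<And>k. norm (f k) \<le> (cmod (\<phi> (norm k)))\<^sup>2 * (norm k + 1 + 1 / norm k)"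
  shows "integrable lborel f"
  using integrable_schwartz_weight[OF assms(1)] assms(2)
  by (rule Bochner_Integration.integrable_bound) (simp add: assms(3))

lemma integrable_norm_Bfun_sq:
  assumes "schwartz \<phi>"
  shows "integrable lborel (\<lambda>k. (norm (Bfun \<phi> m y k))\<^sup>2)"
proof (rule integrable_dominated_by_schwartz_weight[OF assms])
  show "(\<lambda>k. (norm (Bfun \<phi> m y k))\<^sup>2) \<in> borel_measurable lborel"
    using borel_measurable_Bfun[OF assms] by measurable
  fix k :: "real^3"
  have "(norm (Bfun \<phi> m y k))\<^sup>2 \<le> (cmod (\<phi> (norm k)))\<^sup>2 * norm k"
    by (rule norm_Bfun_sq_le)
  also have "\<dots> \<le> (cmod (\<phi> (norm k)))\<^sup>2 * (norm k + 1 + 1 / norm k)"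
    by (intro mult_left_mono) auto
  finally show "norm ((norm (Bfun \<phi> m y k))\<^sup>2) \<le> (cmod (\<phi> (norm k)))\<^sup>2 * (norm k + 1 + 1 / norm k)"
    by simp
qed

lemma integrable_norm_Bfun_div_norm_sq:
  assumes "schwartz \<phi>"
  shows "integrable lborel (\<lambda>k. (norm (Bfun \<phi> m y k) / norm k)\<^sup>2)"
proof (rule integrable_dominated_by_schwartz_weight[OF assms])
  show "(\<lambda>k. (norm (Bfun \<phi> m y k) / norm k)\<^sup>2) \<in> borel_measurable lborel"
    using borel_measurable_Bfun[OF assms] by measurable
  fix k :: "real^3"
  have "(norm (Bfun \<phi> m y k) / norm k)\<^sup>2 = (norm (Bfun \<phi> m y k))\<^sup>2 / (norm k)\<^sup>2"
    by (simp add: power_divide)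
  also have "\<dots> \<le> (cmod (\<phi> (norm k)))\<^sup>2 * norm k / (norm k)\<^sup>2"
    by (intro divide_right_mono norm_Bfun_sq_le) auto
  also have "\<dots> = (cmod (\<phi> (norm k)))\<^sup>2 * (1 / norm k)"
    by (cases "k = 0") (simp_all add: power2_eq_square)
  also have "\<dots> \<le> (cmod (\<phi> (norm k)))\<^sup>2 * (norm k + 1 + 1 / norm k)"
    by (intro mult_left_mono) auto
  finally show "norm ((norm (Bfun \<phi> m y k) / norm k)\<^sup>2) \<le> (cmod (\<phi> (norm k)))\<^sup>2 * (norm k + 1 + 1 / norm k)"
    by simp
qed

lemma integrable_Ajm_integrand:
  assumes "schwartz \<phi>"
  shows "integrable lborel (Ajm_integrand \<phi> j m y)"
proof (rule integrable_dominated_by_schwartz_weight[OF assms])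
  show "Ajm_integrand \<phi> j m y \<in> borel_measurable lborel"
    using borel_measurable_Ajm_integrand[OF assms] by simp
  fix k :: "real^3"
  have "norm (Ajm_integrand \<phi> j m y k) \<le> (cmod (\<phi> (norm k)))\<^sup>2 * 1"
    using norm_Ajm_integrand_le by simp
  also have "\<dots> \<le> (cmod (\<phi> (norm k)))\<^sup>2 * (norm k + 1 + 1 / norm k)"
    by (intro mult_left_mono) auto
  finally show "norm (Ajm_integrand \<phi> j m y k) \<le> (cmod (\<phi> (norm k)))\<^sup>2 * (norm k + 1 + 1 / norm k)" .
qed

lemma Bfun_in_frak_h:
  assumes "schwartz \<phi>"
  shows "in_frak_h (Bfun \<phi> m y)"
  unfolding in_frak_h_def
  using borel_measurable_Bfun[OF assms] integrable_norm_Bfun_sq[OF assms] Bfun_transverse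
  by simp

lemma integral_lborel_reflect:
  fixes f :: "'a::euclidean_space \<Rightarrow> 'b::{banach, second_countable_topology}"
  assumes [measurable]: "f \<in> borel_measurable borel"
  shows "(\<integral>k. f (- k) \<partial>lborel) = (\<integral>k. f k \<partial>lborel)"
proof -
  have "(lborel :: 'a measure) = distr lborel borel uminus"
    using lborel_affine[of "-1::real" "0::'a"] by (simp add: density_1 del: density_cong)
  then have "(\<integral>k. f k \<partial>lborel) = (\<integral>k. f k \<partial>distr lborel borel uminus)"
    by simp
  also have "\<dots> = (\<integral>k. f (- k) \<partial>lborel)"
    by (rule integral_distr) auto
  finally show ?thesis
    by simp
qed

lemma Ajm_commute: "Ajm \<phi> j m y = Ajm \<phi> m j y"
  unfolding Ajm_def Ajm_integrand_def by (simp add: mult.commute eq_commute)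

lemma Ajm_uminus:
  assumes "schwartz \<phi>"
  shows "Ajm \<phi> j m (- y) = Ajm \<phi> j m y"
proof -
  have "(\<integral>k. Ajm_integrand \<phi> j m y k \<partial>lborel) = (\<integral>k. Ajm_integrand \<phi> j m (- y) (- k) \<partial>lborel)"
    unfolding Ajm_integrand_def norm_minus_cancel by simp
  also have "\<dots> = (\<integral>k. Ajm_integrand \<phi> j m (- y) k \<partial>lborel)"
    using borel_measurable_Ajm_integrand[OF assms] by (rule integral_lborel_reflect)
  finally show ?thesis
    unfolding Ajm_def by simp
qed

section \<open>The second-order operator\<close>

lemma pauli_sum: "pauli n l (\<lambda>s'. \<Sum>a\<in>A. Y a s') s = (\<Sum>a\<in>A. pauli n l (Y a) s)"
  unfolding pauli_def by (simp add: sum_distrib_left)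

lemma pauli_scale: "pauli n l (\<lambda>s'. c * Y s') s = c * pauli n l Y s"
  unfolding pauli_def by (simp add: algebra_simps)

lemma l2inner_sum_right:
  assumes "\<And>a. a \<in> A \<Longrightarrow> integrable lborel (\<lambda>k. \<Sum>i\<in>UNIV. cnj (V k $ i) * W a k $ i)"
  shows "l2inner V (\<lambda>k. \<chi> i. \<Sum>a\<in>A. c a * W a k $ i) = (\<Sum>a\<in>A. c a * l2inner V (W a))"
proof -
  have "l2inner V (\<lambda>k. \<chi> i. \<Sum>a\<in>A. c a * W a k $ i)
      = (\<integral>k. (\<Sum>a\<in>A. c a * (\<Sum>i\<in>UNIV. cnj (V k $ i) * W a k $ i)) \<partial>lborel)"
    unfolding l2inner_def by (simp add: sum_distrib_left sum.swap[of _ UNIV] mult_ac)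
  also have "\<dots> = (\<Sum>a\<in>A. c a * l2inner V (W a))"
    unfolding l2inner_def using assms by (simp add: integral_sum)
  finally show ?thesis .
qed

lemma l2inner_Bfun_div_norm:
  "l2inner (Bfun \<phi> n y1) (\<lambda>k. \<chi> i. Bfun \<phi> m y2 k $ i / complex_of_real (norm k)) = Ajm \<phi> n m (y2 - y1)"
proof -
  have "l2inner (Bfun \<phi> n y1) (\<lambda>k. \<chi> i. Bfun \<phi> m y2 k $ i / complex_of_real (norm k))
      = (\<integral>k. complex_of_real (1 / (2 * pi) ^ 3) * Ajm_integrand \<phi> n m (y2 - y1) k \<partial>lborel)"
    unfolding l2inner_def sum_cnj_Bfun_mult_div_norm[symmetric]
    by (simp add: sum_divide_distrib)
  then show ?thesis
    unfolding Ajm_def by simp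
qed

lemma Hph_inv_Hint_Emb:
  "snd (Hph_inv (Hint \<phi> x M (Emb X))) s k $ i =
     (\<Sum>l\<in>UNIV. \<Sum>m\<in>UNIV. complex_of_real (M l) / complex_of_real (sqrt 2)
        * (Bfun \<phi> m (x l) k $ i / complex_of_real (norm k)) * pauli m l X s)"
  unfolding Hph_inv_def Hint_def Emb_def segal_tensor_def
  by (simp add: sum_distrib_left sum_divide_distrib algebra_simps)

lemma Emb_adj_Hint:
  "Emb_adj (Hint \<phi> x M \<Psi>) s =
     (\<Sum>l\<in>UNIV. \<Sum>m\<in>UNIV. complex_of_real (M l) / complex_of_real (sqrt 2)
        * l2inner (Bfun \<phi> m (x l)) (\<lambda>k. \<chi> i. pauli m l (\<lambda>s'. snd \<Psi> s' k $ i) s))"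
  unfolding Emb_adj_def Hint_def segal_tensor_def by simp

lemma l2inner_Bfun_lincomb:
  assumes "schwartz \<phi>"
  shows "l2inner (Bfun \<phi> n y) (\<lambda>k. \<chi> i. \<Sum>a\<in>A. c a * (Bfun \<phi> (m a) (z a) k $ i / complex_of_real (norm k)))
    = (\<Sum>a\<in>A. c a * Ajm \<phi> n (m a) (z a - y))"
proof -
  have "integrable lborel (\<lambda>k. \<Sum>i\<in>UNIV. cnj (Bfun \<phi> n y k $ i) * (\<chi> i. Bfun \<phi> (m a) (z a) k $ i / complex_of_real (norm k)) $ i)" for a
    using integrable_Ajm_integrand[OF assms]
    by (simp add: sum_divide_distrib[symmetric] sum_cnj_Bfun_mult_div_norm)
  then show ?thesis
    using l2inner_sum_right[where W = "\<lambda>a k. \<chi> i. Bfun \<phi> (m a) (z a) k $ i / complex_of_real (norm k)"]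
    by (simp add: l2inner_Bfun_div_norm)
qed

lemma A_op_expand:
  assumes "schwartz \<phi>"
  shows "A_op \<phi> x M X s = - (1/2) * (\<Sum>\<mu>\<in>UNIV. \<Sum>n\<in>UNIV. \<Sum>l\<in>UNIV. \<Sum>m\<in>UNIV.
      complex_of_real (M \<mu> * M l) * Ajm \<phi> n m (x l - x \<mu>) * pauli n \<mu> (pauli m l X) s)"
proof -
  define c where "c l = complex_of_real (M l) / complex_of_real (sqrt 2)" for l
  have c_sq: "complex_of_real (M \<mu> * M l) = 2 * (c \<mu> * c l)" for \<mu> l
    unfolding c_def by (simp flip: of_real_mult)
  have inner: "l2inner (Bfun \<phi> n (x \<mu>)) (\<lambda>k. \<chi> i. pauli n \<mu> (\<lambda>s'. snd (Hph_inv (Hint \<phi> x M (Emb X))) s' k $ i) s)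
      = (\<Sum>(l, m)\<in>UNIV. c l * pauli n \<mu> (pauli m l X) s * Ajm \<phi> n m (x l - x \<mu>))" for n \<mu>
  proof -
    have "l2inner (Bfun \<phi> n (x \<mu>)) (\<lambda>k. \<chi> i. pauli n \<mu> (\<lambda>s'. snd (Hph_inv (Hint \<phi> x M (Emb X))) s' k $ i) s)
        = l2inner (Bfun \<phi> n (x \<mu>)) (\<lambda>k. \<chi> i. \<Sum>(l, m)\<in>UNIV. (c l * pauli n \<mu> (pauli m l X) s)
            * (Bfun \<phi> m (x l) k $ i / complex_of_real (norm k)))"
      unfolding Hph_inv_Hint_Emb pauli_sum pauli_scale
      by (simp add: c_def sum.cartesian_product mult_ac)
    also have "\<dots> = (\<Sum>(l, m)\<in>UNIV. c l * pauli n \<mu> (pauli m l X) s * Ajm \<phi> n m (x l - x \<mu>))"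
      using l2inner_Bfun_lincomb[OF assms, where m = snd and z = "x \<circ> fst"]
      by (simp add: case_prod_beta)
    finally show ?thesis .
  qed
  have "A_op \<phi> x M X s = - (\<Sum>\<mu>\<in>UNIV. \<Sum>n\<in>UNIV. c \<mu> *
      (\<Sum>(l, m)\<in>UNIV. c l * pauli n \<mu> (pauli m l X) s * Ajm \<phi> n m (x l - x \<mu>)))"
    unfolding A_op_def Emb_adj_Hint inner c_def by simp
  then show ?thesis
    unfolding c_sq UNIV_Times_UNIV[symmetric] sum.cartesian_product[symmetric]
    by (simp add: sum_distrib_left mult_ac sum_negf)
qed

lemma sum_swap_nested:
  "(\<Sum>a\<in>A. \<Sum>b\<in>B. \<Sum>c\<in>C. \<Sum>d\<in>D. f a b c d) = (\<Sum>c\<in>C. \<Sum>a\<in>A. \<Sum>d\<in>D. \<Sum>b\<in>B. f a b c d)"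
proof -
  have "(\<Sum>a\<in>A. \<Sum>b\<in>B. \<Sum>c\<in>C. \<Sum>d\<in>D. f a b c d) = (\<Sum>a\<in>A. \<Sum>c\<in>C. \<Sum>b\<in>B. \<Sum>d\<in>D. f a b c d)"
    by (intro sum.cong refl sum.swap)
  also have "\<dots> = (\<Sum>c\<in>C. \<Sum>a\<in>A. \<Sum>b\<in>B. \<Sum>d\<in>D. f a b c d)"
    by (rule sum.swap)
  also have "\<dots> = (\<Sum>c\<in>C. \<Sum>a\<in>A. \<Sum>d\<in>D. \<Sum>b\<in>B. f a b c d)"
    by (intro sum.cong refl sum.swap)
  finally show ?thesis .
qed

theorem proposition3p1:
  fixes \<phi> :: "real \<Rightarrow> complex"
    and x :: "'p::finite \<Rightarrow> real^3"
    and M :: "'p \<Rightarrow> real"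
    and X :: "'p spin"
  assumes "schwartz \<phi>"
  shows "(\<forall>l m. in_frak_h (Bfun \<phi> m (x l))) \<and>
         (\<forall>l m. integrable lborel (\<lambda>k. (norm (Bfun \<phi> m (x l) k) / norm k)\<^sup>2)) \<and>
         (\<forall>j m y. integrable lborel (Ajm_integrand \<phi> j m y)) \<and>
         A_op \<phi> x M X =
           (\<lambda>s. - (1/2) * (\<Sum>l\<in>UNIV. \<Sum>\<mu>\<in>UNIV. \<Sum>j\<in>UNIV. \<Sum>m\<in>UNIV.
                complex_of_real (M l * M \<mu>) * Ajm \<phi> j m (x \<mu> - x l) *
                pauli m \<mu> (pauli j l X) s))"
proof -
  have Ajm_swap: "Ajm \<phi> n m (x l - x \<mu>) = Ajm \<phi> m n (x \<mu> - x l)" for n m l \<mu>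
    using Ajm_uminus[OF assms, of n m "x \<mu> - x l"] Ajm_commute[of \<phi> n m] by simp
  have "A_op \<phi> x M X s = - (1/2) * (\<Sum>l\<in>UNIV. \<Sum>\<mu>\<in>UNIV. \<Sum>j\<in>UNIV. \<Sum>m\<in>UNIV.
      complex_of_real (M l * M \<mu>) * Ajm \<phi> j m (x \<mu> - x l) * pauli m \<mu> (pauli j l X) s)" for s
    unfolding A_op_expand[OF assms]
    by (subst sum_swap_nested) (intro arg_cong2[where f = times] refl sum.cong, simp add: mult_ac, rule Ajm_swap)
  then show ?thesis
    using Bfun_in_frak_h[OF assms] integrable_norm_Bfun_div_norm_sq[OF assms]
      integrable_Ajm_integrand[OF assms]
    by blast
qed

end
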